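(* Let $a,b,c,\gamma\in\mathbb{R}$ with $b\gamma\neq 0$, and let $\Omega\subset\mathbb{R}$ be a compact interval containing $0$ in its interior. Then the control system on $\mathbb{R}^2$ $$\dot s=\omega b,\qquad \dot t=(\gamma+a\omega)s+c\omega,\qquad \omega\in\Omega,$$ is controllable, i.e. for every $\mathbf v\in\mathbb{R}^2$ the positive orbit $\mathcal O^+(\mathbf v)=\{\varphi(\tau,\mathbf v,\omega):\tau\geq 0,\ \omega\in\mathcal U\}$ equals $\mathbb{R}^2$.
   Context: $\mathcal U$ denotes the set of piecewise constant functions $\omega:\mathbb{R}\to\Omega$ (controls), and $\varphi(\tau,\mathbf v,\omega)$ denotes the solution of the system at time $\tau$ with initial state $\mathbf v$ and control $\omega$. *)

theory Defs
  imports "HOL-Analysis.Analysis"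
begin

text \<open>Piecewise constant function on the real line: on every compact interval [a,b]
  there are finitely many break points outside of which the function is locally constant
  (values at the break points themselves are arbitrary).\<close>
definition piecewise_constant :: "(real \<Rightarrow> 'a) \<Rightarrow> bool" where
  "piecewise_constant w \<longleftrightarrow>
     (\<forall>a b. \<exists>S. finite S \<and>
        (\<forall>x y. a \<le> x \<longrightarrow> x \<le> y \<longrightarrow> y \<le> b \<longrightarrow> {x..y} \<inter> S = {} \<longrightarrow> w x = w y))"

definition controls :: "real set \<Rightarrow> (real \<Rightarrow> real) set" where
  "controls \<Omega> = {w. (\<forall>r. w r \<in> \<Omega>) \<and> piecewise_constant w}"

definition sys_rhs :: "real \<Rightarrow> real \<Rightarrow> real \<Rightarrow> real \<Rightarrow> real \<times> real \<Rightarrow> real \<Rightarrow> real \<times> real" where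
  "sys_rhs a b c \<gamma> x w = (w * b, (\<gamma> + a * w) * fst x + c * w)"

text \<open>x is a (Caratheodory, forward-time) solution with initial state v under control w.\<close>
definition is_solution ::
  "real \<Rightarrow> real \<Rightarrow> real \<Rightarrow> real \<Rightarrow> (real \<Rightarrow> real) \<Rightarrow> real \<times> real \<Rightarrow> (real \<Rightarrow> real \<times> real) \<Rightarrow> bool" where
  "is_solution a b c \<gamma> w v x \<longleftrightarrow>
     (\<forall>\<tau>\<ge>0. ((\<lambda>r. sys_rhs a b c \<gamma> (x r) (w r)) has_integral (x \<tau> - v)) {0..\<tau>})"

definition pos_orbit ::
  "real \<Rightarrow> real \<Rightarrow> real \<Rightarrow> real \<Rightarrow> real set \<Rightarrow> real \<times> real \<Rightarrow> (real \<times> real) set" where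
  "pos_orbit a b c \<gamma> \<Omega> v =
     {x \<tau> | \<tau> w x. \<tau> \<ge> 0 \<and> w \<in> controls \<Omega> \<and> is_solution a b c \<gamma> w v x}"

definition controllable :: "real \<Rightarrow> real \<Rightarrow> real \<Rightarrow> real \<Rightarrow> real set \<Rightarrow> bool" where
  "controllable a b c \<gamma> \<Omega> \<longleftrightarrow> (\<forall>v. pos_orbit a b c \<gamma> \<Omega> v = UNIV)"

end

theory Submission
  imports Defs
begin

text \<open>The right-hand side depends on the state only through \<open>s\<close>, so the system is invariant
  under translations in \<open>t\<close>. A constant control of suitable sign steers \<open>s\<close> to any prescribed
  value, at the price of a \<open>t\<close>-displacement that does not depend on the initial \<open>t\<close>. The zero
  control makes \<open>t\<close> drift with speed \<open>\<gamma> s\<close>, whose sign changes with that of \<open>s\<close>; steering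
  \<open>s\<close> to \<open>-s\<close>, drifting, and steering back therefore moves \<open>t\<close> along the line \<open>s = const\<close>
  in either direction. Combining the two manoeuvres reaches every point.\<close>

lemma piecewise_constant_const: "piecewise_constant (\<lambda>_. e)"
  unfolding piecewise_constant_def by auto

lemma piecewise_constant_shift:
  assumes "piecewise_constant w"
  shows "piecewise_constant (\<lambda>r. w (r - d))"
  unfolding piecewise_constant_def
proof (intro allI)
  fix l u :: real
  obtain S where "finite S" and S:
    "\<And>x y. l - d \<le> x \<Longrightarrow> x \<le> y \<Longrightarrow> y \<le> u - d \<Longrightarrow> {x..y} \<inter> S = {} \<Longrightarrow> w x = w y"
    using assms unfolding piecewise_constant_def by meson
  have "w (x - d) = w (y - d)"
    if "l \<le> x" "x \<le> y" "y \<le> u" "{x..y} \<inter> (+) d ` S = {}" for x y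
  proof (rule S)
    show "{x - d..y - d} \<inter> S = {}"
      using that(4) by (force simp: algebra_simps)
  qed (use that in auto)
  with \<open>finite S\<close> show "\<exists>S. finite S \<and> (\<forall>x y. l \<le> x \<longrightarrow> x \<le> y \<longrightarrow> y \<le> u \<longrightarrow>
      {x..y} \<inter> S = {} \<longrightarrow> w (x - d) = w (y - d))"
    by (intro exI[of _ "(+) d ` S"]) auto
qed

lemma piecewise_constant_splice:
  assumes "piecewise_constant f" "piecewise_constant g"
  shows "piecewise_constant (\<lambda>r. if r \<le> d then f r else g r)"
  unfolding piecewise_constant_def
proof (intro allI)
  fix l u :: real
  obtain S1 where "finite S1" and S1:
    "\<And>x y. l \<le> x \<Longrightarrow> x \<le> y \<Longrightarrow> y \<le> u \<Longrightarrow> {x..y} \<inter> S1 = {} \<Longrightarrow> f x = f y"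
    using assms(1) unfolding piecewise_constant_def by meson
  obtain S2 where "finite S2" and S2:
    "\<And>x y. l \<le> x \<Longrightarrow> x \<le> y \<Longrightarrow> y \<le> u \<Longrightarrow> {x..y} \<inter> S2 = {} \<Longrightarrow> g x = g y"
    using assms(2) unfolding piecewise_constant_def by meson
  have "(if x \<le> d then f x else g x) = (if y \<le> d then f y else g y)"
    if "l \<le> x" "x \<le> y" "y \<le> u" "{x..y} \<inter> (insert d (S1 \<union> S2)) = {}" for x y
  proof -
    have "y < d \<or> d < x"
      using that by auto
    then show ?thesis
      using that S1[of x y] S2[of x y] by auto
  qed
  with \<open>finite S1\<close> \<open>finite S2\<close> show "\<exists>S. finite S \<and> (\<forall>x y. l \<le> x \<longrightarrow> x \<le> y \<longrightarrow> y \<le> u \<longrightarrow>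
      {x..y} \<inter> S = {} \<longrightarrow> (if x \<le> d then f x else g x) = (if y \<le> d then f y else g y))"
    by (intro exI[of _ "insert d (S1 \<union> S2)"]) auto
qed

lemma controls_splice:
  assumes "w1 \<in> controls \<Omega>" "w2 \<in> controls \<Omega>"
  shows "(\<lambda>r. if r \<le> d then w1 r else w2 (r - d)) \<in> controls \<Omega>"
  using assms unfolding controls_def
  by (auto intro!: piecewise_constant_splice piecewise_constant_shift)

lemma is_solution_initial:
  assumes "is_solution a b c \<gamma> w v x"
  shows "x 0 = v"
proof -
  have "((\<lambda>r. sys_rhs a b c \<gamma> (x r) (w r)) has_integral (x 0 - v)) {0..0}"
    using assms unfolding is_solution_def by auto
  moreover have "((\<lambda>r. sys_rhs a b c \<gamma> (x r) (w r)) has_integral 0) {0..0::real}"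
    by (rule has_integral_null_real) simp
  ultimately have "x 0 - v = 0"
    by (rule has_integral_unique)
  then show ?thesis
    by simp
qed

lemma is_solution_splice:
  assumes sol1: "is_solution a b c \<gamma> w1 v x1" and sol2: "is_solution a b c \<gamma> w2 (x1 d) x2"
    and "d \<ge> 0"
  shows "is_solution a b c \<gamma> (\<lambda>r. if r \<le> d then w1 r else w2 (r - d)) v
           (\<lambda>r. if r \<le> d then x1 r else x2 (r - d))"
  unfolding is_solution_def
proof (intro allI impI)
  fix \<tau> :: real
  assume "\<tau> \<ge> 0"
  define F where "F r = sys_rhs a b c \<gamma> (if r \<le> d then x1 r else x2 (r - d))
                                       (if r \<le> d then w1 r else w2 (r - d))" for r
  let ?F1 = "\<lambda>r. sys_rhs a b c \<gamma> (x1 r) (w1 r)" and ?F2 = "\<lambda>r. sys_rhs a b c \<gamma> (x2 r) (w2 r)"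
  have first_leg: "(F has_integral (x1 \<tau>' - v)) {0..\<tau>'}" if "0 \<le> \<tau>'" "\<tau>' \<le> d" for \<tau>'
  proof (rule has_integral_eq)
    show "(?F1 has_integral (x1 \<tau>' - v)) {0..\<tau>'}"
      using sol1 \<open>0 \<le> \<tau>'\<close> unfolding is_solution_def by blast
  qed (use that in \<open>auto simp: F_def\<close>)
  show "(F has_integral ((if \<tau> \<le> d then x1 \<tau> else x2 (\<tau> - d)) - v)) {0..\<tau>}"
  proof (cases "\<tau> \<le> d")
    case True
    then show ?thesis
      using first_leg \<open>\<tau> \<ge> 0\<close> by simp
  next
    case False
    have shifted: "((?F2 \<circ> (+) (-d)) has_integral (x2 (\<tau> - d) - x1 d)) {d..\<tau>}"
      using sol2 False unfolding is_solution_def has_integral_shift_Icc_real by simp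
    have "(F has_integral (x2 (\<tau> - d) - x1 d)) {d..\<tau>}"
      by (rule has_integral_spike_finite[where S="{d}", OF _ _ shifted]) (auto simp: F_def)
    with first_leg[OF \<open>d \<ge> 0\<close> order_refl] False
    have "(F has_integral ((x1 d - v) + (x2 (\<tau> - d) - x1 d))) {0..\<tau>}"
      by (intro has_integral_combine) (use \<open>d \<ge> 0\<close> in auto)
    with False show ?thesis
      by simp
  qed
qed

lemma is_solution_translate_snd:
  assumes "is_solution a b c \<gamma> w v x"
  shows "is_solution a b c \<gamma> w (v + (0, h)) (\<lambda>r. x r + (0, h))"
  using assms unfolding is_solution_def sys_rhs_def by simp

lemma is_solution_constant_control:
  "is_solution a b c \<gamma> (\<lambda>_. e) (s, t)
     (\<lambda>r. (s + e * b * r, t + (\<gamma> + a * e) * (s * r + e * b * r\<^sup>2 / 2) + c * e * r))"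
  (is "is_solution _ _ _ _ _ _ ?x")
  unfolding is_solution_def
proof (intro allI impI)
  fix \<tau> :: real
  assume "\<tau> \<ge> 0"
  then have "((\<lambda>r. sys_rhs a b c \<gamma> (?x r) e) has_integral (?x \<tau> - ?x 0)) {0..\<tau>}"
    unfolding sys_rhs_def power2_eq_square
    by (intro fundamental_theorem_of_calculus)
      (auto intro!: derivative_eq_intros simp: algebra_simps)
  then show "((\<lambda>r. sys_rhs a b c \<gamma> (?x r) e) has_integral (?x \<tau> - (s, t))) {0..\<tau>}"
    by simp
qed

lemma pos_orbitI:
  assumes "\<tau> \<ge> 0" "w \<in> controls \<Omega>" "is_solution a b c \<gamma> w v x"
  shows "x \<tau> \<in> pos_orbit a b c \<gamma> \<Omega> v"
  using assms unfolding pos_orbit_def by blast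

lemma pos_orbitE:
  assumes "p \<in> pos_orbit a b c \<gamma> \<Omega> v"
  obtains \<tau> w x where "p = x \<tau>" "\<tau> \<ge> 0" "w \<in> controls \<Omega>" "is_solution a b c \<gamma> w v x"
  using assms unfolding pos_orbit_def by blast

lemma pos_orbit_trans:
  assumes "p \<in> pos_orbit a b c \<gamma> \<Omega> v" "q \<in> pos_orbit a b c \<gamma> \<Omega> p"
  shows "q \<in> pos_orbit a b c \<gamma> \<Omega> v"
proof -
  obtain d w1 x1 where p: "p = x1 d" "d \<ge> 0" "w1 \<in> controls \<Omega>" "is_solution a b c \<gamma> w1 v x1"
    using assms(1) by (rule pos_orbitE)
  obtain \<tau> w2 x2 where q: "q = x2 \<tau>" "\<tau> \<ge> 0" "w2 \<in> controls \<Omega>" "is_solution a b c \<gamma> w2 p x2"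
    using assms(2) by (rule pos_orbitE)
  define w where "w = (\<lambda>r. if r \<le> d then w1 r else w2 (r - d))"
  define x where "x = (\<lambda>r. if r \<le> d then x1 r else x2 (r - d))"
  have "w \<in> controls \<Omega>"
    unfolding w_def using p(3) q(3) by (rule controls_splice)
  moreover have "is_solution a b c \<gamma> w v x"
    unfolding w_def x_def using p q by (intro is_solution_splice) simp_all
  ultimately have "x (d + \<tau>) \<in> pos_orbit a b c \<gamma> \<Omega> v"
    using p(2) q(2) by (intro pos_orbitI) simp_all
  moreover have "x (d + \<tau>) = q"
    using is_solution_initial[OF q(4)] p q unfolding x_def by auto
  ultimately show ?thesis
    by simp
qed

lemma pos_orbit_translate_snd:
  assumes "p \<in> pos_orbit a b c \<gamma> \<Omega> v"
  shows "p + (0, h) \<in> pos_orbit a b c \<gamma> \<Omega> (v + (0, h))"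
  using assms
  by (auto elim!: pos_orbitE intro!: pos_orbitI[where x="\<lambda>r. _ r + (0, h)"] is_solution_translate_snd)

lemma pos_orbit_constant_control:
  assumes "e \<in> \<Omega>" "\<tau> \<ge> 0"
  shows "(s + e * b * \<tau>, t + (\<gamma> + a * e) * (s * \<tau> + e * b * \<tau>\<^sup>2 / 2) + c * e * \<tau>)
           \<in> pos_orbit a b c \<gamma> \<Omega> (s, t)"
  using assms piecewise_constant_const
  by (intro pos_orbitI[OF _ _ is_solution_constant_control, simplified]) (auto simp: controls_def)

context
  fixes a b c \<gamma> :: real and \<Omega> :: "real set" and e1 e2 :: real
  assumes b_nonzero: "b \<noteq> 0" and \<gamma>_nonzero: "\<gamma> \<noteq> 0" and zero_mem: "0 \<in> \<Omega>"
    and e1: "e1 \<in> \<Omega>" "e1 > 0" and e2: "e2 \<in> \<Omega>" "e2 < 0"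
begin

abbreviation orbit :: "real \<times> real \<Rightarrow> (real \<times> real) set"
  where "orbit \<equiv> pos_orbit a b c \<gamma> \<Omega>"

lemma reach_any_s: "\<exists>t'. (s', t') \<in> orbit (s, t)"
proof -
  have "\<exists>e\<in>\<Omega>. e \<noteq> 0 \<and> 0 \<le> e * (b * (s' - s))"
  proof (cases "0 \<le> b * (s' - s)")
    case True
    with e1 show ?thesis
      by (intro bexI[of _ e1]) auto
  next
    case False
    with e2 show ?thesis
      by (intro bexI[of _ e2]) (auto intro: mult_nonpos_nonpos)
  qed
  then obtain e where "e \<in> \<Omega>" "e \<noteq> 0" "0 \<le> e * (b * (s' - s))"
    by blast
  define \<tau> where "\<tau> = (s' - s) / (e * b)"
  have "\<tau> = e * (b * (s' - s)) / (e * b)\<^sup>2"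
    using \<open>e \<noteq> 0\<close> b_nonzero unfolding \<tau>_def by (simp add: power2_eq_square)
  then have "\<tau> \<ge> 0"
    using \<open>0 \<le> e * (b * (s' - s))\<close> by simp
  have "s + e * b * \<tau> = s'"
    using \<open>e \<noteq> 0\<close> b_nonzero unfolding \<tau>_def by simp
  with pos_orbit_constant_control[OF \<open>e \<in> \<Omega>\<close> \<open>\<tau> \<ge> 0\<close>, where a = a and b = b and c = c and \<gamma> = \<gamma>]
  show ?thesis
    by metis
qed

lemma reach_any_s_uniform: "\<exists>\<delta>. \<forall>t. (s', t + \<delta>) \<in> orbit (s, t)"
proof -
  obtain \<delta> where "(s', \<delta>) \<in> orbit (s, 0)"
    using reach_any_s by blast
  then have "(s', t + \<delta>) \<in> orbit (s, t)" for t
    using pos_orbit_translate_snd[of "(s', \<delta>)" a b c \<gamma> \<Omega> "(s, 0)" t] by (simp add: add.commute)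
  then show ?thesis
    by blast
qed

lemma reach_by_drift: "T \<ge> 0 \<Longrightarrow> (s, t + \<gamma> * s * T) \<in> orbit (s, t)"
  using pos_orbit_constant_control[OF zero_mem] by (simp add: mult.assoc)

lemma reach_any_t_of_nonzero:
  assumes "s \<noteq> 0"
  shows "(s, t') \<in> orbit (s, t)"
proof -
  obtain \<alpha> where \<alpha>: "\<And>t. (-s, t + \<alpha>) \<in> orbit (s, t)"
    using reach_any_s_uniform by blast
  obtain \<beta> where \<beta>: "\<And>t. (s, t + \<beta>) \<in> orbit (-s, t)"
    using reach_any_s_uniform by blast
  define d where "d = (t' - t - \<alpha> - \<beta>) / (\<gamma> * s)"
  define T1 where "T1 = max d 0"
  define T2 where "T2 = max (- d) 0"
  note [trans] = pos_orbit_trans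
  text \<open>Drift along \<open>s\<close> if \<open>d \<ge> 0\<close> and along \<open>-s\<close> otherwise.\<close>
  have "(s, t + \<gamma> * s * T1) \<in> orbit (s, t)"
    by (rule reach_by_drift) (simp add: T1_def)
  also have "(-s, t + \<gamma> * s * T1 + \<alpha>) \<in> orbit (s, t + \<gamma> * s * T1)"
    by (rule \<alpha>)
  also have "(-s, t + \<gamma> * s * T1 + \<alpha> + \<gamma> * (-s) * T2) \<in> orbit (-s, t + \<gamma> * s * T1 + \<alpha>)"
    by (rule reach_by_drift) (simp add: T2_def)
  also have "(s, t + \<gamma> * s * T1 + \<alpha> + \<gamma> * (-s) * T2 + \<beta>)
               \<in> orbit (-s, t + \<gamma> * s * T1 + \<alpha> + \<gamma> * (-s) * T2)"
    by (rule \<beta>)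
  also have "t + \<gamma> * s * T1 + \<alpha> + \<gamma> * (-s) * T2 + \<beta> = t'"
  proof -
    have "\<gamma> * s * (T1 - T2) = t' - t - \<alpha> - \<beta>"
      using \<gamma>_nonzero assms unfolding T1_def T2_def d_def by (simp add: max_def)
    then show ?thesis
      by (simp add: algebra_simps)
  qed
  finally show ?thesis .
qed

lemma reach_everywhere: "p \<in> orbit v"
proof -
  obtain s0 t0 s1 t1 where "v = (s0, t0)" "p = (s1, t1)"
    by fastforce
  obtain \<delta> where "\<And>t. (s1, t + \<delta>) \<in> orbit (1, t)"
    using reach_any_s_uniform by blast
  then have "(s1, t1) \<in> orbit (1, t1 - \<delta>)"
    by (metis diff_add_cancel)
  moreover obtain t' where "(1, t') \<in> orbit (s0, t0)"
    using reach_any_s by blast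
  moreover have "(1, t1 - \<delta>) \<in> orbit (1, t')"
    by (rule reach_any_t_of_nonzero) simp
  ultimately show ?thesis
    unfolding \<open>v = (s0, t0)\<close> \<open>p = (s1, t1)\<close> by (blast intro: pos_orbit_trans)
qed

end

theorem proposition6:
  fixes a b c \<gamma> :: real and \<Omega> :: "real set"
  assumes "b * \<gamma> \<noteq> 0"
    and "compact \<Omega>" and "is_interval \<Omega>" and "0 \<in> interior \<Omega>"
  shows "controllable a b c \<gamma> \<Omega>"
proof -
  obtain r where "r > 0" "ball 0 r \<subseteq> \<Omega>"
    using \<open>0 \<in> interior \<Omega>\<close> mem_interior by blast
  then have "r / 2 \<in> \<Omega>" "- (r / 2) \<in> \<Omega>" "0 \<in> \<Omega>"
    by (auto simp: subset_eq)
  with \<open>b * \<gamma> \<noteq> 0\<close> \<open>r > 0\<close> show ?thesis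
    unfolding controllable_def using reach_everywhere[of b \<gamma> \<Omega> "r / 2" "- (r / 2)"] by auto
qed

end
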